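(* Let $p$ be an odd prime. If $M$ is an $A$-module which is free of finite rank over $\mathbb{Z}_{(p)}$, then $\Phi_nM=0$ for some $n$.
   Context: $A$ is the ring of degree zero stable operations in $p$-local complex $K$-theory (a $\mathbb{Z}_{(p)}$-algebra). Fix $q$ primitive mod $p^2$, $\Psi^q\in A$ the Adams operation, $q_i=q^{(-1)^i\lfloor i/2\rfloor}$, $\Theta_n(X)=\prod_{i=1}^n(X-q_i)$, and $\Phi_n=\Theta_n(\Psi^q)\in A$; every element of $A$ is uniquely a convergent sum $\sum_{n\ge0}a_n\Phi_n$ with $a_n\in\mathbb{Z}_{(p)}$. *)

theory Defs
  imports "HOL-Computational_Algebra.Polynomial" "HOL-Number_Theory.Number_Theory"
begin

text \<open>The p-local integers Z_(p), as a subset of the rationals.\<close>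
definition Zp :: "nat \<Rightarrow> rat set" where
  "Zp p = {r. \<not> int p dvd snd (quotient_of r)}"

definition qi :: "int \<Rightarrow> nat \<Rightarrow> rat" where
  "qi q i = (rat_of_int q) powi ((-1) ^ i * int (i div 2))"

definition Theta :: "int \<Rightarrow> nat \<Rightarrow> rat poly" where
  "Theta q n = (\<Prod>i\<in>{1..n}. [: - qi q i, 1 :])"

definition theta_coeff :: "int \<Rightarrow> rat poly \<Rightarrow> nat \<Rightarrow> rat" where
  "theta_coeff q f = (THE d. (\<forall>j > degree f. d j = 0) \<and>
       f = (\<Sum>j\<le>degree f. Polynomial.smult (d j) (Theta q j)))"

text \<open>The ring A: an element sum_n a_n Phi_n is represented by its coefficient
  sequence a (with a_n in Z_(p)). Addition is coefficientwise; multiplication is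
  induced by Phi_n Phi_m = (Theta_n Theta_m)(Psi^q) = sum_k c_k Phi_k.\<close>
definition A_carrier :: "nat \<Rightarrow> (nat \<Rightarrow> rat) set" where
  "A_carrier p = {a. \<forall>n. a n \<in> Zp p}"

definition A_add :: "(nat \<Rightarrow> rat) \<Rightarrow> (nat \<Rightarrow> rat) \<Rightarrow> (nat \<Rightarrow> rat)" where
  "A_add a b = (\<lambda>k. a k + b k)"

definition A_mult :: "int \<Rightarrow> (nat \<Rightarrow> rat) \<Rightarrow> (nat \<Rightarrow> rat) \<Rightarrow> (nat \<Rightarrow> rat)" where
  "A_mult q a b = (\<lambda>k. \<Sum>n\<le>k. \<Sum>m\<le>k.
       a n * b m * theta_coeff q (Theta q n * Theta q m) k)"

definition Phi_el :: "nat \<Rightarrow> (nat \<Rightarrow> rat)" where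
  "Phi_el n = (\<lambda>k. if k = n then 1 else 0)"

definition A_scalar :: "rat \<Rightarrow> (nat \<Rightarrow> rat)" where
  "A_scalar c = (\<lambda>k. if k = 0 then c else 0)"

definition Zp_free :: "nat \<Rightarrow> nat \<Rightarrow> (nat \<Rightarrow> rat) set" where
  "Zp_free p r = {v. (\<forall>i. v i \<in> Zp p) \<and> (\<forall>i\<ge>r. v i = 0)}"

text \<open>act is an A-module structure on Z_(p)^r whose underlying Z_(p)-module
  structure (via Z_(p) -> A) is the standard one.\<close>
definition A_module_on :: "nat \<Rightarrow> int \<Rightarrow> nat \<Rightarrow>
    ((nat \<Rightarrow> rat) \<Rightarrow> (nat \<Rightarrow> rat) \<Rightarrow> (nat \<Rightarrow> rat)) \<Rightarrow> bool" where
  "A_module_on p q r act \<longleftrightarrow>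
     (\<forall>a\<in>A_carrier p. \<forall>v\<in>Zp_free p r. act a v \<in> Zp_free p r) \<and>
     (\<forall>a\<in>A_carrier p. \<forall>b\<in>A_carrier p. \<forall>v\<in>Zp_free p r.
        act (A_add a b) v = (\<lambda>i. act a v i + act b v i)) \<and>
     (\<forall>a\<in>A_carrier p. \<forall>v\<in>Zp_free p r. \<forall>w\<in>Zp_free p r.
        act a (\<lambda>i. v i + w i) = (\<lambda>i. act a v i + act a w i)) \<and>
     (\<forall>a\<in>A_carrier p. \<forall>b\<in>A_carrier p. \<forall>v\<in>Zp_free p r.
        act (A_mult q a b) v = act a (act b v)) \<and>
     (\<forall>c\<in>Zp p. \<forall>v\<in>Zp_free p r. act (A_scalar c) v = (\<lambda>i. c * v i))"

end

(* Only the additivity of the action matters; neither the oddness of p nor the choice of q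
   plays a role. For a basis vector e_i and a coordinate j, the map a |-> (a e_i)_j is additive
   from A = Z_(p)^N to Z_(p), and Z_(p) is slender: such a map f vanishes on all but finitely
   many Phi_n. Otherwise pick, for n in the infinite set B where f Phi_n <> 0, an exponent k_n
   with f Phi_n / p^k_n not in Z_(p), and put s_n = k_0 + ... + k_(n-1). For E a subset of B the
   values f (sum_{n in E} p^s_n Phi_n) are pairwise distinct: if E and E' first differ at J,
   the two values differ by p^s_J (f Phi_J + p^k_J z) with z in Z_(p). This would inject the
   uncountable power set of B into Q. Hence a single Phi_N kills every e_i, and therefore all
   of M, since additive maps from a Z_(p)-module to Q are Z_(p)-linear. *)

theory Submission
  imports Defs "HOL-Library.Equipollence"
begin

lemma Zp_iff_fraction:
  "x \<in> Zp p \<longleftrightarrow> (\<exists>a b. b > 0 \<and> \<not> int p dvd b \<and> x = of_int a / of_int b)"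
proof
  assume "x \<in> Zp p"
  then show "\<exists>a b. b > 0 \<and> \<not> int p dvd b \<and> x = of_int a / of_int b"
    by (cases "quotient_of x")
       (auto simp: Zp_def intro: quotient_of_denom_pos quotient_of_div)
next
  assume "\<exists>a b. b > 0 \<and> \<not> int p dvd b \<and> x = of_int a / of_int b"
  then obtain a b where b: "b > 0" "\<not> int p dvd b" and x: "x = of_int a / of_int b"
    by blast
  obtain a' b' where q: "quotient_of x = (a', b')"
    by (cases "quotient_of x")
  have "x = of_int a' / of_int b'" "b' > 0"
    using quotient_of_div[OF q] quotient_of_denom_pos[OF q] by simp_all
  with x b have "a' * b = a * b'"
    by (simp add: field_simps flip: of_int_mult of_int_eq_iff)
  then have "b' dvd a' * b"
    by simp
  then have "b' dvd b"
    using quotient_of_coprime[OF q] by (metis coprime_commute coprime_dvd_mult_right_iff)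
  with b show "x \<in> Zp p"
    by (auto simp: Zp_def q dest: dvd_trans)
qed

lemma Ints_imp_Zp: "prime p \<Longrightarrow> x \<in> \<int> \<Longrightarrow> x \<in> Zp p"
  by (auto elim!: Ints_cases simp: Zp_def)

lemma Zp_add:
  assumes "prime p" "x \<in> Zp p" "y \<in> Zp p"
  shows "x + y \<in> Zp p"
proof -
  from assms(2,3) obtain a b c d where
    b: "b > 0" "\<not> int p dvd b" "x = of_int a / of_int b" and
    d: "d > 0" "\<not> int p dvd d" "y = of_int c / of_int d"
    by (auto simp: Zp_iff_fraction)
  have "\<not> int p dvd b * d"
    using assms(1) b(2) d(2) by (simp add: prime_dvd_mult_iff)
  moreover have "x + y = of_int (a * d + c * b) / of_int (b * d)"
    using b d by (simp add: add_frac_eq)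
  ultimately show ?thesis
    using b(1) d(1) unfolding Zp_iff_fraction by (meson mult_pos_pos)
qed

lemma Zp_mult:
  assumes "prime p" "x \<in> Zp p" "y \<in> Zp p"
  shows "x * y \<in> Zp p"
proof -
  from assms(2,3) obtain a b c d where
    b: "b > 0" "\<not> int p dvd b" "x = of_int a / of_int b" and
    d: "d > 0" "\<not> int p dvd d" "y = of_int c / of_int d"
    by (auto simp: Zp_iff_fraction)
  have "\<not> int p dvd b * d"
    using assms(1) b(2) d(2) by (simp add: prime_dvd_mult_iff)
  moreover have "x * y = of_int (a * c) / of_int (b * d)"
    using b d by simp
  ultimately show ?thesis
    using b(1) d(1) unfolding Zp_iff_fraction by (meson mult_pos_pos)
qed

lemma Zp_uminus: "prime p \<Longrightarrow> x \<in> Zp p \<Longrightarrow> - x \<in> Zp p"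
  using Zp_mult[of p "-1" x] by (simp add: Ints_imp_Zp)

lemma not_in_Zp_divide_prime_power:
  assumes "prime p" "x \<noteq> 0"
  shows "\<exists>k. x / of_nat p ^ k \<notin> Zp p"
proof -
  obtain a b where "b > 0" and x: "x = of_int a / of_int b"
    by (cases "quotient_of x") (auto intro: quotient_of_denom_pos quotient_of_div)
  with assms(2) have "a \<noteq> 0" "b \<noteq> 0"
    by auto
  define k where "k = Suc (nat \<bar>a\<bar>)"
  have "\<bar>a\<bar> < int p ^ k"
  proof -
    have "k \<le> p ^ k"
      using prime_ge_2_nat[OF assms(1)] by simp
    then show ?thesis
      unfolding k_def by (metis Suc_le_eq nat_less_iff abs_ge_zero of_nat_power)
  qed
  moreover have "int p ^ k dvd a" if "x / of_nat p ^ k \<in> Zp p"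
  proof -
    from that obtain c d where d: "\<not> int p dvd d" "d > 0"
      and "x / of_nat p ^ k = of_int c / of_int d"
      by (auto simp: Zp_iff_fraction)
    moreover have "(of_nat p ^ k :: rat) \<noteq> 0"
      using assms(1) by auto
    ultimately have "(of_int a / (of_int b * of_nat p ^ k) :: rat) = of_int c / of_int d"
      using x by simp
    then have "of_int a * of_int d = of_int c * (of_int b * (of_nat p ^ k :: rat))"
      using \<open>b \<noteq> 0\<close> \<open>d > 0\<close> \<open>(of_nat p ^ k :: rat) \<noteq> 0\<close>
      by (intro frac_eq_eq[THEN iffD1]) simp_all
    then have "(of_int (a * d) :: rat) = of_int (int p ^ k * (c * b))"
      by (simp add: mult_ac)
    then have "a * d = int p ^ k * (c * b)"
      by (simp only: of_int_eq_iff)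
    then have "int p ^ k dvd a * d"
      by simp
    moreover have "coprime (int p ^ k) d"
      using d(1) assms(1) by (simp add: prime_imp_coprime)
    ultimately show ?thesis
      by (simp add: coprime_dvd_mult_left_iff)
  qed
  ultimately show ?thesis
    using dvd_imp_le_int[OF \<open>a \<noteq> 0\<close>, of "int p ^ k"] by auto
qed

definition Zp_submodule :: "nat \<Rightarrow> (nat \<Rightarrow> rat) set \<Rightarrow> bool" where
  "Zp_submodule p S \<longleftrightarrow> (\<lambda>_. 0) \<in> S \<and> (\<forall>v\<in>S. \<forall>w\<in>S. (\<lambda>i. v i + w i) \<in> S) \<and>
     (\<forall>c\<in>Zp p. \<forall>v\<in>S. (\<lambda>i. c * v i) \<in> S)"

definition additive_on :: "(nat \<Rightarrow> rat) set \<Rightarrow> ((nat \<Rightarrow> rat) \<Rightarrow> rat) \<Rightarrow> bool" where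
  "additive_on S f \<longleftrightarrow> (\<forall>v\<in>S. \<forall>w\<in>S. f (\<lambda>i. v i + w i) = f v + f w)"

lemma Zp_submoduleD:
  assumes "Zp_submodule p S"
  shows "(\<lambda>_. 0) \<in> S" "v \<in> S \<Longrightarrow> w \<in> S \<Longrightarrow> (\<lambda>i. v i + w i) \<in> S"
    "c \<in> Zp p \<Longrightarrow> v \<in> S \<Longrightarrow> (\<lambda>i. c * v i) \<in> S"
  using assms by (auto simp: Zp_submodule_def)

lemma additive_onD:
  "additive_on S f \<Longrightarrow> v \<in> S \<Longrightarrow> w \<in> S \<Longrightarrow> f (\<lambda>i. v i + w i) = f v + f w"
  by (simp add: additive_on_def)

lemma Zp_submodule_A_carrier:
  assumes "prime p"
  shows "Zp_submodule p (A_carrier p)"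
  using Ints_imp_Zp[OF assms] Zp_add[OF assms] Zp_mult[OF assms]
  by (auto simp: Zp_submodule_def A_carrier_def)

lemma Zp_submodule_Zp_free:
  assumes "prime p"
  shows "Zp_submodule p (Zp_free p r)"
  using Ints_imp_Zp[OF assms] Zp_add[OF assms] Zp_mult[OF assms]
  by (auto simp: Zp_submodule_def Zp_free_def)

lemma Phi_el_in_A_carrier: "prime p \<Longrightarrow> Phi_el n \<in> A_carrier p"
  by (simp add: A_carrier_def Phi_el_def Ints_imp_Zp)

lemma Phi_el_in_Zp_free: "prime p \<Longrightarrow> i < r \<Longrightarrow> Phi_el i \<in> Zp_free p r"
  by (simp add: Zp_free_def Phi_el_def Ints_imp_Zp)

context
  fixes p :: nat and S :: "(nat \<Rightarrow> rat) set" and f :: "(nat \<Rightarrow> rat) \<Rightarrow> rat"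
  assumes p: "prime p" and S: "Zp_submodule p S" and f: "additive_on S f"
begin

lemma additive_on_zero: "f (\<lambda>_. 0) = 0"
  using additive_onD[OF f Zp_submoduleD(1)[OF S] Zp_submoduleD(1)[OF S]] by simp

lemma additive_on_scale_of_nat:
  assumes "v \<in> S"
  shows "f (\<lambda>i. of_nat m * v i) = of_nat m * f v"
proof (induction m)
  case 0
  then show ?case
    by (simp add: additive_on_zero)
next
  case (Suc m)
  have mv: "(\<lambda>i. of_nat m * v i) \<in> S"
    using Zp_submoduleD(3)[OF S _ assms] Ints_imp_Zp[OF p] by simp
  have "f (\<lambda>i. of_nat (Suc m) * v i) = f (\<lambda>i. of_nat m * v i + v i)"
    by (simp add: algebra_simps)
  also have "\<dots> = of_nat m * f v + f v"
    using additive_onD[OF f mv assms] Suc.IH by simp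
  finally show ?case
    by (simp add: algebra_simps)
qed

lemma additive_on_scale_of_int:
  assumes "v \<in> S"
  shows "f (\<lambda>i. of_int a * v i) = of_int a * f v"
proof (cases "a \<ge> 0")
  case True
  then show ?thesis
    using additive_on_scale_of_nat[OF assms, of "nat a"] by simp
next
  case False
  have in_S: "(\<lambda>i. of_int b * v i) \<in> S" for b
    using Zp_submoduleD(3)[OF S _ assms] Ints_imp_Zp[OF p] by simp
  have "f (\<lambda>i. of_int a * v i) + f (\<lambda>i. of_int (- a) * v i) =
      f (\<lambda>i. of_int a * v i + of_int (- a) * v i)"
    by (rule additive_onD[OF f in_S in_S, symmetric])
  also have "\<dots> = 0"
    by (simp add: additive_on_zero)
  finally show ?thesis
    using False additive_on_scale_of_nat[OF assms, of "nat (- a)"] by (simp add: eq_neg_iff_add_eq_0)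
qed

lemma additive_on_scale_Zp:
  assumes "c \<in> Zp p" "v \<in> S"
  shows "f (\<lambda>i. c * v i) = c * f v"
proof -
  obtain a b where "b > 0" and c: "c = of_int a / of_int b"
    using assms(1) by (auto simp: Zp_iff_fraction)
  have "of_int b * f (\<lambda>i. c * v i) = f (\<lambda>i. of_int b * (c * v i))"
    using additive_on_scale_of_int[OF Zp_submoduleD(3)[OF S assms]] by simp
  also have "\<dots> = f (\<lambda>i. of_int a * v i)"
    using \<open>b > 0\<close> by (simp add: c)
  also have "\<dots> = of_int b * (c * f v)"
    using \<open>b > 0\<close> by (simp add: additive_on_scale_of_int[OF assms(2)] c)
  finally show ?thesis
    using \<open>b > 0\<close> by simp
qed

lemma additive_on_sum:
  assumes "finite I" "\<And>i. i \<in> I \<Longrightarrow> w i \<in> S"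
  shows "(\<lambda>l. \<Sum>i\<in>I. w i l) \<in> S \<and> f (\<lambda>l. \<Sum>i\<in>I. w i l) = (\<Sum>i\<in>I. f (w i))"
  using assms
proof (induction I rule: finite_induct)
  case empty
  then show ?case
    using Zp_submoduleD(1)[OF S] by (simp add: additive_on_zero)
next
  case (insert j I)
  then show ?case
    using Zp_submoduleD(2)[OF S] additive_onD[OF f] by simp
qed

end

(* Phi_el i doubles as the i-th standard basis vector of Zp_free p r. *)
lemma additive_on_Zp_free_expansion:
  assumes "prime p" "additive_on (Zp_free p r) f" "v \<in> Zp_free p r"
  shows "f v = (\<Sum>i<r. v i * f (Phi_el i))"
proof -
  note free = Zp_submodule_Zp_free[OF assms(1)]
  have coord: "v i \<in> Zp p" for i
    using assms(3) by (simp add: Zp_free_def)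
  have "v = (\<lambda>l. \<Sum>i<r. v i * Phi_el i l)"
    using assms(3) by (auto simp: Zp_free_def Phi_el_def fun_eq_iff if_distrib[of "(*) _"] cong: if_cong)
  then have "f v = (\<Sum>i<r. f (\<lambda>l. v i * Phi_el i l))"
    using additive_on_sum[OF assms(1) free assms(2), of "{..<r}" "\<lambda>i l. v i * Phi_el i l"]
      Zp_submoduleD(3)[OF free coord Phi_el_in_Zp_free[OF assms(1)]] by simp
  also have "\<dots> = (\<Sum>i<r. v i * f (Phi_el i))"
    using additive_on_scale_Zp[OF assms(1) free assms(2) coord Phi_el_in_Zp_free[OF assms(1)]]
    by simp
  finally show ?thesis .
qed

lemma uncountable_Pow:
  assumes "infinite A"
  shows "uncountable (Pow A)"
proof
  assume "countable (Pow A)"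
  then have "Pow A \<lesssim> (UNIV :: nat set)"
    unfolding countable_def lepoll_def by blast
  also have "(UNIV :: nat set) \<lesssim> A"
    using assms by (simp add: infinite_le_lepoll)
  finally show False
    using lesspoll_Pow_self[of A] by (meson lepoll_antisym lesspoll_def)
qed

lemma additive_on_separates_first_difference:
  assumes p: "prime p"
    and f: "additive_on (A_carrier p) f" and f_Zp: "\<And>a. a \<in> A_carrier p \<Longrightarrow> f a \<in> Zp p"
    and J: "J \<in> E" "J \<notin> E'" "\<And>n. n < J \<Longrightarrow> n \<in> E \<longleftrightarrow> n \<in> E'"
    and s: "\<And>n. J < n \<Longrightarrow> s J + k \<le> s n"
    and k: "f (Phi_el J) / of_nat p ^ k \<notin> Zp p"
  shows "f (\<lambda>n. if n \<in> E then of_nat p ^ s n else 0) \<noteq>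
    f (\<lambda>n. if n \<in> E' then of_nat p ^ s n else 0)"
proof
  let ?X = "\<lambda>E n. if n \<in> E then of_nat p ^ s n else (0 :: rat)"
  define D where "D n = (if J < n
      then (of_bool (n \<in> E) - of_bool (n \<in> E')) * of_nat p ^ (s n - (s J + k)) else (0 :: rat))"
    for n
  note A = Zp_submodule_A_carrier[OF p]
  have X_in: "?X E'' \<in> A_carrier p" for E''
    by (simp add: A_carrier_def Ints_imp_Zp[OF p])
  have D_in: "D \<in> A_carrier p"
    by (simp add: A_carrier_def D_def Ints_imp_Zp[OF p])
  have pJ_in: "of_nat p ^ s J \<in> Zp p" and pJk_in: "of_nat p ^ (s J + k) \<in> Zp p"
    by (simp_all add: Ints_imp_Zp[OF p])
  have decomp: "?X E =
      (\<lambda>n. ?X E' n + (of_nat p ^ s J * Phi_el J n + of_nat p ^ (s J + k) * D n))"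
  proof
    fix n
    consider "n < J" | "n = J" | "J < n"
      by linarith
    then show "?X E n = ?X E' n + (of_nat p ^ s J * Phi_el J n + of_nat p ^ (s J + k) * D n)"
    proof cases
      case 3
      then have "of_nat p ^ (s J + k) * of_nat p ^ (s n - (s J + k)) = (of_nat p ^ s n :: rat)"
        using s by (simp flip: power_add)
      with 3 show ?thesis
        by (auto simp: D_def Phi_el_def algebra_simps)
    qed (use J in \<open>auto simp: D_def Phi_el_def\<close>)
  qed
  assume "f (?X E) = f (?X E')"
  moreover have "f (?X E) =
      f (?X E') + (of_nat p ^ s J * f (Phi_el J) + of_nat p ^ (s J + k) * f D)"
    by (subst decomp)
      (simp add: additive_onD[OF f] additive_on_scale_Zp[OF p A f] Zp_submoduleD[OF A]
        X_in D_in pJ_in pJk_in Phi_el_in_A_carrier[OF p])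
  ultimately have "of_nat p ^ s J * (f (Phi_el J) + of_nat p ^ k * f D) = 0"
    by (simp add: algebra_simps power_add)
  then have "f (Phi_el J) + of_nat p ^ k * f D = 0"
    using prime_gt_0_nat[OF p] by simp
  then have "f (Phi_el J) / of_nat p ^ k = - f D"
    using prime_gt_0_nat[OF p] by (simp add: field_simps)
  then show False
    using k Zp_uminus[OF p f_Zp[OF D_in]] by simp
qed

lemma Zp_slender:
  assumes p: "prime p"
    and f: "additive_on (A_carrier p) f" and f_Zp: "\<And>a. a \<in> A_carrier p \<Longrightarrow> f a \<in> Zp p"
  shows "finite {n. f (Phi_el n) \<noteq> 0}"
proof (rule ccontr)
  define B where "B = {n. f (Phi_el n) \<noteq> 0}"
  assume "infinite {n. f (Phi_el n) \<noteq> 0}"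
  then have "infinite B"
    by (simp add: B_def)
  have "\<forall>n\<in>B. \<exists>k. f (Phi_el n) / of_nat p ^ k \<notin> Zp p"
    using not_in_Zp_divide_prime_power[OF p] by (simp add: B_def)
  from bchoice[OF this] obtain k where k: "\<forall>n\<in>B. f (Phi_el n) / of_nat p ^ k n \<notin> Zp p"
    by blast
  define s where "s n = (\<Sum>m<n. k m)" for n
  have s: "s J + k J \<le> s n" if "J < n" for J n
    using that unfolding s_def by (simp add: sum_mono2 flip: sum.lessThan_Suc)
  define X where "X E = (\<lambda>n. if n \<in> E then of_nat p ^ s n else (0 :: rat))" for E
  have "inj_on (\<lambda>E. f (X E)) (Pow B)"
  proof (rule inj_onI, rule ccontr)
    fix E E' assume "E \<in> Pow B" "E' \<in> Pow B" "f (X E) = f (X E')" "E \<noteq> E'"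
    then obtain n0 where "(n0 \<in> E) \<noteq> (n0 \<in> E')"
      by blast
    define J where "J = (LEAST n. (n \<in> E) \<noteq> (n \<in> E'))"
    have J: "(J \<in> E) \<noteq> (J \<in> E')"
      unfolding J_def by (rule LeastI) fact
    have below_J: "n \<in> E \<longleftrightarrow> n \<in> E'" if "n < J" for n
      using not_less_Least[OF that[unfolded J_def]] by blast
    have "J \<in> B"
      using J \<open>E \<in> Pow B\<close> \<open>E' \<in> Pow B\<close> by blast
    note separates = additive_on_separates_first_difference[where s = s and k = "k J" and J = J,
        OF p f f_Zp _ _ _ s k[rule_format, OF \<open>J \<in> B\<close>]]
    from J consider "J \<in> E" "J \<notin> E'" | "J \<in> E'" "J \<notin> E"
      by blast
    then show False
    proof cases
      case 1
      with separates[of E E'] below_J \<open>f (X E) = f (X E')\<close> show False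
        by (simp add: X_def)
    next
      case 2
      with separates[of E' E] below_J \<open>f (X E) = f (X E')\<close> show False
        by (simp add: X_def)
    qed
  qed
  then have "countable (Pow B)"
    by (rule countableI')
  with uncountable_Pow[OF \<open>infinite B\<close>] show False
    by contradiction
qed

lemma A_module_on_closed:
  "A_module_on p q r act \<Longrightarrow> a \<in> A_carrier p \<Longrightarrow> v \<in> Zp_free p r \<Longrightarrow> act a v \<in> Zp_free p r"
  by (simp add: A_module_on_def)

lemma A_module_on_additive_in_operator:
  assumes "A_module_on p q r act" "v \<in> Zp_free p r"
  shows "additive_on (A_carrier p) (\<lambda>a. act a v j)"
  using assms by (simp add: A_module_on_def additive_on_def A_add_def)

lemma A_module_on_additive_in_vector:
  assumes "A_module_on p q r act" "a \<in> A_carrier p"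
  shows "additive_on (Zp_free p r) (\<lambda>v. act a v j)"
  using assms by (simp add: A_module_on_def additive_on_def)

theorem proposition3p6:
  fixes p :: nat and q :: int and r :: nat
    and act :: "(nat \<Rightarrow> rat) \<Rightarrow> (nat \<Rightarrow> rat) \<Rightarrow> (nat \<Rightarrow> rat)"
  assumes "prime p" and "odd p"
    and "residue_primroot (p ^ 2) (nat (q mod int (p ^ 2)))"
    and "A_module_on p q r act"
  shows "\<exists>n. \<forall>v\<in>Zp_free p r. act (Phi_el n) v = (\<lambda>i. 0)"
proof -
  note p = assms(1) and M = assms(4)
  have "finite {n. act (Phi_el n) (Phi_el i) j \<noteq> 0}" if "i < r" for i j
    using Zp_slender[OF p A_module_on_additive_in_operator[OF M Phi_el_in_Zp_free[OF p that]]]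
      A_module_on_closed[OF M _ Phi_el_in_Zp_free[OF p that]]
    by (simp add: Zp_free_def)
  then have "finite (\<Union>i<r. \<Union>j<r. {n. act (Phi_el n) (Phi_el i) j \<noteq> 0})"
    by simp
  then obtain N where "(\<Union>i<r. \<Union>j<r. {n. act (Phi_el n) (Phi_el i) j \<noteq> 0}) \<subseteq> {..<N}"
    using finite_nat_bounded by presburger
  then have N: "act (Phi_el N) (Phi_el i) j = 0" if "i < r" "j < r" for i j
    using that by blast
  have "act (Phi_el N) v j = 0" if "v \<in> Zp_free p r" for v j
  proof (cases "j < r")
    case True
    then show ?thesis
      using additive_on_Zp_free_expansion[OF p
          A_module_on_additive_in_vector[OF M Phi_el_in_A_carrier[OF p]] that] N
      by simp
  next
    case False
    then show ?thesis
      using A_module_on_closed[OF M Phi_el_in_A_carrier[OF p] that] by (simp add: Zp_free_def)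
  qed
  then show ?thesis
    by blast
qed

end
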